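(* Let $0<r\le 1/2$, let $H$ be an $r$-skew LKS-graph on $n$ vertices with parameters $(k,\eta,\varepsilon,d)$ (with $k,\eta,d$ arbitrary), and let $\mathbf H$ be its cluster graph. Then: (1) If $C$ is an $L$-cluster and $D$ is an $S$-cluster of $\mathbf H$, then $|C|\le n/|V(\mathbf H)|$ and $|D|\le \frac{n}{r|V(\mathbf H)|}$. (2) If $v\in V(H)$ is an ultratypical vertex, $C$ is the cluster of $\mathbf H$ containing $v$, and $\mathcal S\subseteq V(\mathbf H)$ is any set of clusters, then $\deg(v,\bigcup\mathcal S)\ge \overline{\deg}(C,\mathcal S)-2\sqrt{\varepsilon}\,n/r$.
   Context: For disjoint vertex sets $X,Y$, $d(X,Y)=|E(X,Y)|/(|X||Y|)$ is the density, and $(X,Y)$ is $\varepsilon$-regular if $|d(X',Y')-d(X,Y)|\le\varepsilon$ for all $X'\subseteq X$, $Y'\subseteq Y$ with $|X'|\ge\varepsilon|X|$, $|Y'|\ge\varepsilon|Y|$. For $r\le 1/2$, a graph $H$ is an $r$-skew LKS-graph with parameters $(k,\eta,\varepsilon,d)$ if there is a partition $\{L_1,\dots,L_{m_L},S_1,\dots,S_{m_S}\}$ of $V(H)$ such that: (i) $m_L\ge(1+\eta)m_S$; (ii) all $L_i$ have the same size and all $S_j$ have the same size; (iii) $r|S_j|=(1-r)|L_i|$ for all $i,j$; (iv) each pair $(L_i,L_j)$ ($i\ne j$) and each pair $(L_i,S_j)$ is $\varepsilon$-regular of density either $0$ or at least $d$; (v) there are no edges inside any of the sets and no edges between $S_i$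 and $S_j$ for $i\ne j$; (vi) the average degree of the vertices of each $L_i$ is at least $(1+\eta)k$. The sets $L_i$ are $L$-clusters, the sets $S_j$ are $S$-clusters. The cluster graph $\mathbf H$ has vertex set $\{L_1,\dots,L_{m_L},S_1,\dots,S_{m_S}\}$ (the clusters), with an edge between two clusters whenever the corresponding pair has positive density in $H$. For $v\in V(H)$ and $Z\subseteq V(H)$, $\deg(v,Z)$ is the number of neighbours of $v$ in $Z$. For a set $\mathcal S$ of clusters, $\bigcup\mathcal S$ is the union of its clusters, and for a cluster $A$, $\overline{\deg}(A,\mathcal S)$ is the average of $\deg(a,\bigcup\mathcal S)$ over $a\in A$. A vertex $x$ of a cluster $X$ is typical with respect to a cluster $Y$ if $\deg(x,Y)\ge (d(X,Y)-\varepsilon)|Y|$; $x$ is ultratypical if it is typical with respect to all but at most $\sqrt{\varepsilon}\,|V(\mathbf H)|$ clusters $Y\ne X$. *)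

theory Defs
  imports Complex_Main
begin

definition simple_graph :: "'a set \<Rightarrow> ('a \<Rightarrow> 'a \<Rightarrow> bool) \<Rightarrow> bool" where
  "simple_graph V E \<longleftrightarrow> finite V \<and> (\<forall>x y. E x y \<longrightarrow> x \<in> V \<and> y \<in> V)
     \<and> (\<forall>x y. E x y \<longrightarrow> E y x) \<and> (\<forall>x. \<not> E x x)"

definition edge_count :: "('a \<Rightarrow> 'a \<Rightarrow> bool) \<Rightarrow> 'a set \<Rightarrow> 'a set \<Rightarrow> nat" where
  "edge_count E X Y = card {(x, y). x \<in> X \<and> y \<in> Y \<and> E x y}"

definition density :: "('a \<Rightarrow> 'a \<Rightarrow> bool) \<Rightarrow> 'a set \<Rightarrow> 'a set \<Rightarrow> real" where
  "density E X Y = real (edge_count E X Y) / (real (card X) * real (card Y))"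

definition eps_regular :: "('a \<Rightarrow> 'a \<Rightarrow> bool) \<Rightarrow> real \<Rightarrow> 'a set \<Rightarrow> 'a set \<Rightarrow> bool" where
  "eps_regular E \<epsilon> X Y \<longleftrightarrow>
     (\<forall>X' Y'. X' \<subseteq> X \<longrightarrow> Y' \<subseteq> Y \<longrightarrow> real (card X') \<ge> \<epsilon> * real (card X)
        \<longrightarrow> real (card Y') \<ge> \<epsilon> * real (card Y)
        \<longrightarrow> \<bar>density E X' Y' - density E X Y\<bar> \<le> \<epsilon>)"

definition deg_in :: "('a \<Rightarrow> 'a \<Rightarrow> bool) \<Rightarrow> 'a \<Rightarrow> 'a set \<Rightarrow> nat" where
  "deg_in E v Z = card {u \<in> Z. E v u}"

definition avg_deg_in :: "('a \<Rightarrow> 'a \<Rightarrow> bool) \<Rightarrow> 'a set \<Rightarrow> 'a set \<Rightarrow> real" where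
  "avg_deg_in E A Z = (\<Sum>a\<in>A. real (deg_in E a Z)) / real (card A)"

text \<open>Vertex set of the cluster graph: the set of all clusters.\<close>
definition clusters :: "(nat \<Rightarrow> 'a set) \<Rightarrow> nat \<Rightarrow> (nat \<Rightarrow> 'a set) \<Rightarrow> nat \<Rightarrow> 'a set set" where
  "clusters L mL S mS = L ` {..<mL} \<union> S ` {..<mS}"

definition density_ok :: "('a \<Rightarrow> 'a \<Rightarrow> bool) \<Rightarrow> real \<Rightarrow> real \<Rightarrow> 'a set \<Rightarrow> 'a set \<Rightarrow> bool" where
  "density_ok E \<epsilon> d X Y \<longleftrightarrow> eps_regular E \<epsilon> X Y \<and> (density E X Y = 0 \<or> density E X Y \<ge> d)"

definition no_edges :: "('a \<Rightarrow> 'a \<Rightarrow> bool) \<Rightarrow> 'a set \<Rightarrow> 'a set \<Rightarrow> bool" where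
  "no_edges E X Y \<longleftrightarrow> (\<forall>x\<in>X. \<forall>y\<in>Y. \<not> E x y)"

text \<open>H=(V,E) is an r-skew LKS-graph with parameters (k,eta,eps,d), witnessed by the partition
  into L-clusters L 0,...,L (mL-1) and S-clusters S 0,...,S (mS-1).\<close>
definition skew_LKS ::
  "real \<Rightarrow> 'a set \<Rightarrow> ('a \<Rightarrow> 'a \<Rightarrow> bool) \<Rightarrow> real \<Rightarrow> real \<Rightarrow> real \<Rightarrow> real
     \<Rightarrow> (nat \<Rightarrow> 'a set) \<Rightarrow> nat \<Rightarrow> (nat \<Rightarrow> 'a set) \<Rightarrow> nat \<Rightarrow> bool" where
  "skew_LKS r V E k \<eta> \<epsilon> d L mL S mS \<longleftrightarrow>
     \<comment> \<open>partition of V\<close>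
     (\<forall>i<mL. L i \<noteq> {}) \<and> (\<forall>j<mS. S j \<noteq> {})
     \<and> (\<forall>i<mL. \<forall>i'<mL. i \<noteq> i' \<longrightarrow> L i \<inter> L i' = {})
     \<and> (\<forall>j<mS. \<forall>j'<mS. j \<noteq> j' \<longrightarrow> S j \<inter> S j' = {})
     \<and> (\<forall>i<mL. \<forall>j<mS. L i \<inter> S j = {})
     \<and> (\<Union>i<mL. L i) \<union> (\<Union>j<mS. S j) = V
     \<comment> \<open>(i)\<close>
     \<and> real mL \<ge> (1 + \<eta>) * real mS
     \<comment> \<open>(ii)\<close>
     \<and> (\<forall>i<mL. \<forall>i'<mL. card (L i) = card (L i'))
     \<and> (\<forall>j<mS. \<forall>j'<mS. card (S j) = card (S j'))
     \<comment> \<open>(iii)\<close>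
     \<and> (\<forall>i<mL. \<forall>j<mS. r * real (card (S j)) = (1 - r) * real (card (L i)))
     \<comment> \<open>(iv)\<close>
     \<and> (\<forall>i<mL. \<forall>i'<mL. i \<noteq> i' \<longrightarrow> density_ok E \<epsilon> d (L i) (L i'))
     \<and> (\<forall>i<mL. \<forall>j<mS. density_ok E \<epsilon> d (L i) (S j))
     \<comment> \<open>(v)\<close>
     \<and> (\<forall>i<mL. no_edges E (L i) (L i)) \<and> (\<forall>j<mS. no_edges E (S j) (S j))
     \<and> (\<forall>j<mS. \<forall>j'<mS. j \<noteq> j' \<longrightarrow> no_edges E (S j) (S j'))
     \<comment> \<open>(vi)\<close>
     \<and> (\<forall>i<mL. avg_deg_in E (L i) V \<ge> (1 + \<eta>) * k)"

definition typical :: "('a \<Rightarrow> 'a \<Rightarrow> bool) \<Rightarrow> real \<Rightarrow> 'a set \<Rightarrow> 'a set \<Rightarrow> 'a \<Rightarrow> bool" where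
  "typical E \<epsilon> X Y x \<longleftrightarrow> real (deg_in E x Y) \<ge> (density E X Y - \<epsilon>) * real (card Y)"

definition ultratypical :: "('a \<Rightarrow> 'a \<Rightarrow> bool) \<Rightarrow> real \<Rightarrow> 'a set set \<Rightarrow> 'a set \<Rightarrow> 'a \<Rightarrow> bool" where
  "ultratypical E \<epsilon> Cl X x \<longleftrightarrow>
     real (card {Y \<in> Cl. Y \<noteq> X \<and> \<not> typical E \<epsilon> X Y x}) \<le> sqrt \<epsilon> * real (card Cl)"

end

theory Submission
  imports Defs
begin

text \<open>Every cluster has at least as many vertices as an \<open>L\<close>-cluster and at least \<open>r\<close> times as
  many as an \<open>S\<close>-cluster, since \<open>r |S| = (1 - r) |L|\<close> with \<open>r \<le> 1/2\<close>; averaging over the partition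
  gives (1). For (2), both degrees split as sums over the clusters \<open>Y \<in> \<S>\<close>. The deficit
  \<open>avg_deg(C, Y) - deg(v, Y)\<close> is at most \<open>min \<epsilon> 1 |Y| \<le> \<surd>\<epsilon> |Y|\<close> when \<open>v\<close> is typical
  w.r.t. \<open>Y\<close>, it is at most \<open>0\<close> for \<open>Y = C\<close> since clusters are independent, and it is at most
  \<open>|Y| \<le> n / (r |V(H)|)\<close> on the at most \<open>\<surd>\<epsilon> |V(H)|\<close> remaining clusters. Summing gives
  \<open>\<surd>\<epsilon> n + \<surd>\<epsilon> n / r \<le> 2 \<surd>\<epsilon> n / r\<close>.\<close>

lemma deg_in_Union_disjoint:
  assumes "finite \<S>" "pairwise disjnt \<S>" "\<And>Y. Y \<in> \<S> \<Longrightarrow> finite Y"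
  shows "deg_in E v (\<Union>\<S>) = (\<Sum>Y\<in>\<S>. deg_in E v Y)"
proof -
  have "{u \<in> \<Union>\<S>. E v u} = (\<Union>Y\<in>\<S>. {u \<in> Y. E v u})" by blast
  moreover have "card (\<Union>Y\<in>\<S>. {u \<in> Y. E v u}) = (\<Sum>Y\<in>\<S>. card {u \<in> Y. E v u})"
    using assms by (intro card_UN_disjoint) (auto simp: pairwise_def disjnt_def)
  ultimately show ?thesis unfolding deg_in_def by simp
qed

lemma avg_deg_in_Union_disjoint:
  assumes "finite \<S>" "pairwise disjnt \<S>" "\<And>Y. Y \<in> \<S> \<Longrightarrow> finite Y"
  shows "avg_deg_in E C (\<Union>\<S>) = (\<Sum>Y\<in>\<S>. avg_deg_in E C Y)"
proof -
  have "(\<Sum>a\<in>C. real (deg_in E a (\<Union>\<S>))) = (\<Sum>a\<in>C. \<Sum>Y\<in>\<S>. real (deg_in E a Y))"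
    using deg_in_Union_disjoint[OF assms] by simp
  also have "\<dots> = (\<Sum>Y\<in>\<S>. \<Sum>a\<in>C. real (deg_in E a Y))" by (rule sum.swap)
  finally show ?thesis unfolding avg_deg_in_def by (simp add: sum_divide_distrib)
qed

lemma sum_deg_in_eq_edge_count:
  assumes "finite C" "finite Y"
  shows "(\<Sum>a\<in>C. deg_in E a Y) = edge_count E C Y"
proof -
  have "{(x, y). x \<in> C \<and> y \<in> Y \<and> E x y} = Sigma C (\<lambda>x. {y \<in> Y. E x y})" by auto
  then show ?thesis unfolding edge_count_def deg_in_def using assms by simp
qed

lemma avg_deg_in_eq_density:
  assumes "finite C" "finite Y"
  shows "avg_deg_in E C Y = density E C Y * real (card Y)"
proof (cases "Y = {}")
  case True
  then show ?thesis by (simp add: avg_deg_in_def deg_in_def)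
next
  case False
  then have "card Y > 0" using assms(2) by auto
  moreover have "(\<Sum>a\<in>C. real (deg_in E a Y)) = real (edge_count E C Y)"
    using sum_deg_in_eq_edge_count[OF assms] by (metis of_nat_sum)
  ultimately show ?thesis unfolding avg_deg_in_def density_def by simp
qed

lemma avg_deg_in_le_card:
  assumes "finite Y"
  shows "avg_deg_in E C Y \<le> real (card Y)"
proof (cases "card C = 0")
  case True
  then show ?thesis by (simp add: avg_deg_in_def)
next
  case False
  have "(\<Sum>a\<in>C. real (deg_in E a Y)) \<le> (\<Sum>a\<in>C. real (card Y))"
    by (intro sum_mono) (simp add: deg_in_def assms card_mono)
  then show ?thesis using False unfolding avg_deg_in_def by (simp add: divide_le_eq mult.commute)
qed

lemma avg_deg_in_no_edges:
  assumes "no_edges E C Y"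
  shows "avg_deg_in E C Y = 0"
proof -
  have no_neighbours: "{u \<in> Y. E a u} = {}" if "a \<in> C" for a
    using assms that unfolding no_edges_def by blast
  have "(\<Sum>a\<in>C. real (deg_in E a Y)) = 0"
    unfolding deg_in_def by (intro sum.neutral ballI) (simp add: no_neighbours)
  then show ?thesis unfolding avg_deg_in_def by simp
qed

lemma typical_avg_deg_in_le:
  assumes "finite C" "finite Y" "typical E \<epsilon> C Y v"
  shows "avg_deg_in E C Y - real (deg_in E v Y) \<le> \<epsilon> * real (card Y)"
  using assms(3) unfolding typical_def avg_deg_in_eq_density[OF assms(1,2)]
  by (simp add: algebra_simps)

lemma min_le_sqrt:
  fixes x :: real
  assumes "0 \<le> x"
  shows "min x 1 \<le> sqrt x"
proof (cases "x \<le> 1")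
  case True
  then have "sqrt x * sqrt x \<le> sqrt x * 1"
    using assms by (intro mult_left_mono) auto
  then show ?thesis using assms by simp
qed simp

lemma typical_avg_deg_in_le_sqrt:
  assumes "finite C" "finite Y" "0 \<le> \<epsilon>" "typical E \<epsilon> C Y v"
  shows "avg_deg_in E C Y - real (deg_in E v Y) \<le> sqrt \<epsilon> * real (card Y)"
proof -
  have "avg_deg_in E C Y - real (deg_in E v Y) \<le> min \<epsilon> 1 * real (card Y)"
    using typical_avg_deg_in_le[OF assms(1,2,4)] avg_deg_in_le_card[OF assms(2), of E C]
    by (simp add: min_def)
  also have "\<dots> \<le> sqrt \<epsilon> * real (card Y)"
    using min_le_sqrt[OF assms(3)] by (intro mult_right_mono) auto
  finally show ?thesis .
qed

lemma le_card_Union_div_card: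
  assumes "finite \<C>" "pairwise disjnt \<C>" "\<And>Y. Y \<in> \<C> \<Longrightarrow> finite Y" "\<C> \<noteq> {}"
    and "\<And>Y. Y \<in> \<C> \<Longrightarrow> m \<le> real (card Y)"
  shows "m \<le> real (card (\<Union>\<C>)) / real (card \<C>)"
proof -
  have "real (card \<C>) * m = (\<Sum>Y\<in>\<C>. m)" by simp
  also have "\<dots> \<le> (\<Sum>Y\<in>\<C>. real (card Y))" using assms(5) by (rule sum_mono)
  also have "\<dots> = real (card (\<Union>\<C>))"
    using card_Union_disjoint[OF assms(2,3)] by simp
  finally show ?thesis
    using assms(1,4) by (simp add: le_divide_eq mult.commute card_gt_0_iff)
qed

lemma ultratypical_deg_in_Union_ge:
  assumes fin: "finite \<C>" "pairwise disjnt \<C>" "\<And>Y. Y \<in> \<C> \<Longrightarrow> finite Y"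
    and card_le: "\<And>Y. Y \<in> \<C> \<Longrightarrow> real (card Y) \<le> M"
    and C: "C \<in> \<C>" "no_edges E C C"
    and eps: "0 \<le> \<epsilon>" and ut: "ultratypical E \<epsilon> \<C> C v" and sub: "\<S> \<subseteq> \<C>"
  shows "avg_deg_in E C (\<Union>\<S>) - real (deg_in E v (\<Union>\<S>))
           \<le> sqrt \<epsilon> * real (card (\<Union>\<C>)) + sqrt \<epsilon> * real (card \<C>) * M"
proof -
  define B where "B = {Y \<in> \<C>. Y \<noteq> C \<and> \<not> typical E \<epsilon> C Y v}"
  define f where "f Y = avg_deg_in E C Y - real (deg_in E v Y)" for Y
  define g where "g Y = sqrt \<epsilon> * real (card Y) + (if Y \<in> B then real (card Y) else 0)" for Y
  have "0 \<le> sqrt \<epsilon>" using eps by simp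
  have f_le_g: "f Y \<le> g Y" if Y: "Y \<in> \<C>" for Y
  proof -
    have nonneg: "0 \<le> sqrt \<epsilon> * real (card Y)" using \<open>0 \<le> sqrt \<epsilon>\<close> by simp
    consider "Y \<in> B" | "Y = C" | "typical E \<epsilon> C Y v" using Y B_def by blast
    then show ?thesis
    proof cases
      case 1
      then show ?thesis using avg_deg_in_le_card[OF fin(3)[OF Y], of E C] nonneg
        unfolding f_def g_def by simp
    next
      case 2
      then show ?thesis using avg_deg_in_no_edges[OF C(2)] nonneg
        unfolding f_def g_def B_def by simp
    next
      case 3
      then have "Y \<notin> B" unfolding B_def by blast
      with 3 show ?thesis
        using typical_avg_deg_in_le_sqrt[OF fin(3)[OF C(1)] fin(3)[OF Y] eps]
        unfolding f_def g_def by simp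
    qed
  qed
  have "0 \<le> M" using card_le[OF C(1)] by linarith
  have "B \<subseteq> \<C>" unfolding B_def by blast
  have "avg_deg_in E C (\<Union>\<S>) - real (deg_in E v (\<Union>\<S>)) = (\<Sum>Y\<in>\<S>. f Y)"
    using sub fin pairwise_subset[OF fin(2)] finite_subset[OF _ fin(1)]
    by (simp add: f_def avg_deg_in_Union_disjoint deg_in_Union_disjoint sum_subtractf subset_iff)
  also have "\<dots> \<le> (\<Sum>Y\<in>\<S>. g Y)"
    using f_le_g sub by (intro sum_mono) auto
  also have "\<dots> \<le> (\<Sum>Y\<in>\<C>. g Y)"
    using \<open>0 \<le> sqrt \<epsilon>\<close> by (intro sum_mono2[OF fin(1) sub]) (simp add: g_def)
  also have "\<dots> = sqrt \<epsilon> * (\<Sum>Y\<in>\<C>. real (card Y)) + (\<Sum>Y\<in>B. real (card Y))"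
    using fin(1) \<open>B \<subseteq> \<C>\<close>
    by (simp add: g_def sum.distrib sum_distrib_left sum.If_cases Int_absorb1)
  also have "(\<Sum>Y\<in>\<C>. real (card Y)) = real (card (\<Union>\<C>))"
    using card_Union_disjoint[OF fin(2,3)] by simp
  also have "(\<Sum>Y\<in>B. real (card Y)) \<le> real (card B) * M"
    using sum_mono[of B "\<lambda>Y. real (card Y)" "\<lambda>_. M"] card_le \<open>B \<subseteq> \<C>\<close> by auto
  also have "\<dots> \<le> sqrt \<epsilon> * real (card \<C>) * M"
    using ut \<open>0 \<le> M\<close>
    unfolding ultratypical_def B_def by (intro mult_right_mono)
  finally show ?thesis by simp
qed

lemma skew_LKSD:
  assumes "skew_LKS r V E k \<eta> \<epsilon> d L mL S mS"
  shows "\<forall>i<mL. \<forall>i'<mL. i \<noteq> i' \<longrightarrow> L i \<inter> L i' = {}"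
    and "\<forall>j<mS. \<forall>j'<mS. j \<noteq> j' \<longrightarrow> S j \<inter> S j' = {}"
    and "\<forall>i<mL. \<forall>j<mS. L i \<inter> S j = {}"
    and "(\<Union>i<mL. L i) \<union> (\<Union>j<mS. S j) = V"
    and "\<forall>i<mL. \<forall>i'<mL. card (L i) = card (L i')"
    and "\<forall>j<mS. \<forall>j'<mS. card (S j) = card (S j')"
    and "\<forall>i<mL. \<forall>j<mS. r * real (card (S j)) = (1 - r) * real (card (L i))"
    and "\<forall>i<mL. no_edges E (L i) (L i)"
    and "\<forall>j<mS. no_edges E (S j) (S j)"
  using assms unfolding skew_LKS_def by (simp_all only: conj_imp_eq_imp_imp)

lemma skew_LKS_Union_clusters:
  assumes "skew_LKS r V E k \<eta> \<epsilon> d L mL S mS"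
  shows "\<Union>(clusters L mL S mS) = V"
  using skew_LKSD(4)[OF assms] unfolding clusters_def by auto

lemma finite_clusters: "finite (clusters L mL S mS)"
  by (simp add: clusters_def)

lemma skew_LKS_finite_cluster:
  assumes "finite V" "skew_LKS r V E k \<eta> \<epsilon> d L mL S mS" "Y \<in> clusters L mL S mS"
  shows "finite Y"
  using assms skew_LKS_Union_clusters[OF assms(2)] by (metis Union_upper finite_subset)

lemma skew_LKS_pairwise_disjnt_clusters:
  assumes "skew_LKS r V E k \<eta> \<epsilon> d L mL S mS"
  shows "pairwise disjnt (clusters L mL S mS)"
proof -
  note disjoint = skew_LKSD(1-3)[OF assms]
  have "L i \<inter> L i' = {}" if "i < mL" "i' < mL" "L i \<noteq> L i'" for i i'
    using disjoint(1) that by blast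
  moreover have "S j \<inter> S j' = {}" if "j < mS" "j' < mS" "S j \<noteq> S j'" for j j'
    using disjoint(2) that by blast
  moreover have "L i \<inter> S j = {}" "S j \<inter> L i = {}" if "i < mL" "j < mS" for i j
    using disjoint(3) that by blast+
  ultimately show ?thesis
    unfolding pairwise_def disjnt_def clusters_def by blast
qed

lemma skew_LKS_no_edges_clusters:
  assumes "skew_LKS r V E k \<eta> \<epsilon> d L mL S mS" "C \<in> clusters L mL S mS"
  shows "no_edges E C C"
  using skew_LKSD(8,9)[OF assms(1)] assms(2) unfolding clusters_def by auto

lemma skew_LKS_card_L_le_card_cluster:
  assumes "skew_LKS r V E k \<eta> \<epsilon> d L mL S mS" "0 < r" "r \<le> 1/2"
    and "i < mL" "Y \<in> clusters L mL S mS"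
  shows "real (card (L i)) \<le> real (card Y)"
proof -
  have "real (card (L i)) \<le> real (card (S j))" if "j < mS" for j
  proof -
    have "r * real (card (S j)) = (1 - r) * real (card (L i))"
      using skew_LKSD(7)[OF assms(1)] assms(4) that by blast
    moreover have "r * real (card (L i)) \<le> (1 - r) * real (card (L i))"
      using assms(3) by (intro mult_right_mono) auto
    ultimately have "r * real (card (L i)) \<le> r * real (card (S j))" by simp
    then show ?thesis using assms(2) by (simp add: mult_le_cancel_left_pos)
  qed
  moreover have "card (L i') = card (L i)" if "i' < mL" for i'
    using skew_LKSD(5)[OF assms(1)] assms(4) that by blast
  ultimately show ?thesis using assms(5) unfolding clusters_def by auto
qed

lemma skew_LKS_card_S_le_card_cluster:
  assumes "skew_LKS r V E k \<eta> \<epsilon> d L mL S mS" "0 < r" "r \<le> 1/2"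
    and "j < mS" "Y \<in> clusters L mL S mS"
  shows "r * real (card (S j)) \<le> real (card Y)"
proof -
  have "r * real (card (S j)) \<le> real (card (L i))" if "i < mL" for i
  proof -
    have "r * real (card (S j)) = (1 - r) * real (card (L i))"
      using skew_LKSD(7)[OF assms(1)] assms(4) that by blast
    moreover have "0 \<le> r * real (card (L i))" using assms(2) by simp
    ultimately show ?thesis by (simp add: algebra_simps)
  qed
  moreover have "r * real (card (S j)) \<le> real (card (S j'))" if "j' < mS" for j'
  proof -
    have "card (S j') = card (S j)"
      using skew_LKSD(6)[OF assms(1)] assms(4) that by blast
    moreover have "r * real (card (S j)) \<le> 1 * real (card (S j))"
      using assms(3) by (intro mult_right_mono) auto
    ultimately show ?thesis by simp
  qed
  ultimately show ?thesis using assms(5) unfolding clusters_def by auto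
qed

lemma skew_LKS_card_L_le:
  assumes "finite V" "skew_LKS r V E k \<eta> \<epsilon> d L mL S mS" "0 < r" "r \<le> 1/2" "i < mL"
  shows "real (card (L i)) \<le> real (card V) / real (card (clusters L mL S mS))"
proof -
  have "clusters L mL S mS \<noteq> {}" using assms(5) by (auto simp: clusters_def)
  from le_card_Union_div_card[OF finite_clusters skew_LKS_pairwise_disjnt_clusters[OF assms(2)]
      skew_LKS_finite_cluster[OF assms(1,2)] this skew_LKS_card_L_le_card_cluster[OF assms(2-5)]]
  show ?thesis unfolding skew_LKS_Union_clusters[OF assms(2)] .
qed

lemma skew_LKS_card_S_le:
  assumes "finite V" "skew_LKS r V E k \<eta> \<epsilon> d L mL S mS" "0 < r" "r \<le> 1/2" "j < mS"
  shows "real (card (S j)) \<le> real (card V) / (r * real (card (clusters L mL S mS)))"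
proof -
  have "clusters L mL S mS \<noteq> {}" using assms(5) by (auto simp: clusters_def)
  from le_card_Union_div_card[OF finite_clusters skew_LKS_pairwise_disjnt_clusters[OF assms(2)]
      skew_LKS_finite_cluster[OF assms(1,2)] this skew_LKS_card_S_le_card_cluster[OF assms(2-5)]]
  have "r * real (card (S j)) \<le> real (card V) / real (card (clusters L mL S mS))"
    unfolding skew_LKS_Union_clusters[OF assms(2)] .
  also have "\<dots> = r * (real (card V) / (r * real (card (clusters L mL S mS))))"
    using assms(3) by simp
  finally show ?thesis using assms(3) mult_le_cancel_left_pos by blast
qed

lemma skew_LKS_card_cluster_le:
  assumes "finite V" "skew_LKS r V E k \<eta> \<epsilon> d L mL S mS" "0 < r" "r \<le> 1/2"
    and "Y \<in> clusters L mL S mS"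
  shows "real (card Y) \<le> real (card V) / (r * real (card (clusters L mL S mS)))"
proof -
  have "0 < real (card (clusters L mL S mS))"
    using assms(5) finite_clusters by (auto simp: card_gt_0_iff)
  then have "real (card V) / real (card (clusters L mL S mS))
          \<le> real (card V) / (r * real (card (clusters L mL S mS)))"
    using assms(3,4) by (intro divide_left_mono) auto
  then show ?thesis using assms skew_LKS_card_L_le skew_LKS_card_S_le
    unfolding clusters_def by fastforce
qed

theorem proposition3p2:
  fixes V :: "'a set" and E :: "'a \<Rightarrow> 'a \<Rightarrow> bool"
    and r k \<eta> \<epsilon> d :: real
    and L S :: "nat \<Rightarrow> 'a set" and mL mS :: nat
  assumes "simple_graph V E"
    and "0 < r" and "r \<le> 1/2" and "0 < \<epsilon>"
    and "skew_LKS r V E k \<eta> \<epsilon> d L mL S mS"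
  shows "(\<forall>i<mL. real (card (L i)) \<le> real (card V) / real (card (clusters L mL S mS)))
       \<and> (\<forall>j<mS. real (card (S j)) \<le> real (card V) / (r * real (card (clusters L mL S mS))))
       \<and> (\<forall>v C \<S>. v \<in> V \<longrightarrow> C \<in> clusters L mL S mS \<longrightarrow> v \<in> C
            \<longrightarrow> ultratypical E \<epsilon> (clusters L mL S mS) C v
            \<longrightarrow> \<S> \<subseteq> clusters L mL S mS
            \<longrightarrow> real (deg_in E v (\<Union>\<S>))
                  \<ge> avg_deg_in E C (\<Union>\<S>) - 2 * sqrt \<epsilon> * real (card V) / r)"
proof -
  have "finite V" using assms(1) unfolding simple_graph_def by blast
  define n where "n = real (card V)"
  define N where "N = real (card (clusters L mL S mS))"
  have "deg_in E v (\<Union>\<S>) \<ge> avg_deg_in E C (\<Union>\<S>) - 2 * sqrt \<epsilon> * n / r"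
    if C: "C \<in> clusters L mL S mS" and "ultratypical E \<epsilon> (clusters L mL S mS) C v"
      and "\<S> \<subseteq> clusters L mL S mS" for v C \<S>
  proof -
    have "avg_deg_in E C (\<Union>\<S>) - deg_in E v (\<Union>\<S>) \<le> sqrt \<epsilon> * n + sqrt \<epsilon> * N * (n / (r * N))"
      using ultratypical_deg_in_Union_ge[OF finite_clusters skew_LKS_pairwise_disjnt_clusters[OF assms(5)]
          skew_LKS_finite_cluster[OF \<open>finite V\<close> assms(5)]
          skew_LKS_card_cluster_le[OF \<open>finite V\<close> assms(5,2,3)] C
          skew_LKS_no_edges_clusters[OF assms(5) C]] that assms(4)
      unfolding skew_LKS_Union_clusters[OF assms(5)] n_def N_def by simp
    also have "\<dots> \<le> 2 * sqrt \<epsilon> * n / r"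
    proof -
      have "0 < N" using C finite_clusters unfolding N_def by (auto simp: card_gt_0_iff)
      moreover have "sqrt \<epsilon> * n \<le> sqrt \<epsilon> * n / r"
        using assms(2,3) assms(4) unfolding n_def by (simp add: le_divide_eq mult_left_le)
      ultimately show ?thesis by simp
    qed
    finally show ?thesis by simp
  qed
  then show ?thesis
    using skew_LKS_card_L_le[OF \<open>finite V\<close> assms(5,2,3)] skew_LKS_card_S_le[OF \<open>finite V\<close> assms(5,2,3)]
    unfolding n_def by blast
qed

end
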